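(* Let $G$ be a countable group and $\mu$ a symmetric probability measure on $G$ supported on a subgroup $H$ equipped with a quasi-norm $\|\cdot\|$. Assume there are a constant $d>0$ and a positive increasing function $\phi$ on $(0,\infty)$, regularly varying of positive index at infinity, such that $\#\{h\in H:\|h\|\le r\}\simeq r^d$ and $\mu(h)\asymp[\phi(1+\|h\|)(1+\|h\|)^d]^{-1}$ for $h\in H$. Then there is a constant $C$ such that for all $f\in L^2(G)$, all $R\ge1$ and all $h\in H$ with $\|h\|\le R$, $$\sum_{x\in G}|f(xh)-f(x)|^2\le C\phi(R)\,\mathcal E_{G,\mu}(f,f).$$
   Context: A quasi-norm on a group $H$ is a map $N:H\to[0,\infty)$ with a constant $A$ such that $N(gh)\le A(N(g)+N(h))$ for all $g,h$ (here also assumed symmetric, $N(g^{-1})=N(g)$, with $N(e)=0$). For positive functions, $f_1\asymp f_2$ means $c_1f_1\le f_2\le c_2f_1$ for constants $0<c_1\le c_2$; $f_1\simeq f_2$ on $[1,\infty)$ means $c_1f_1(c_2t)\le f_2(t)\le c_3f_1(c_4t)$ for constants $c_i>0$. A positive function $f$ is regularly varying of index $\gamma$ at infinity if $f(\lambda t)/f(t)\to\lambda^\gamma$ for every $\lambda>0$. $\mathcal E_{G,\mu}(f,f)=\frac12\sum_{x,y\in G}|f(xy)-f(x)|^2\mu(y)$ for $f\in L^2(G)$ (counting measure). *)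

theory Defs
  imports "HOL-Analysis.Analysis" "HOL-Library.Countable"
begin

text \<open>Groups are written additively (type class group_add, not necessarily commutative);
  the product x h of the paper is x + h.\<close>

definition is_subgroup :: "'a::group_add set \<Rightarrow> bool" where
  "is_subgroup H \<longleftrightarrow> 0 \<in> H \<and> (\<forall>g\<in>H. \<forall>h\<in>H. g + h \<in> H) \<and> (\<forall>h\<in>H. - h \<in> H)"

definition quasi_norm_on :: "'a::group_add set \<Rightarrow> ('a \<Rightarrow> real) \<Rightarrow> bool" where
  "quasi_norm_on H N \<longleftrightarrow>
     (\<forall>h\<in>H. N h \<ge> 0) \<and> N 0 = 0 \<and> (\<forall>h\<in>H. N (- h) = N h) \<and>
     (\<exists>A. \<forall>g\<in>H. \<forall>h\<in>H. N (g + h) \<le> A * (N g + N h))"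

definition regularly_varying :: "(real \<Rightarrow> real) \<Rightarrow> real \<Rightarrow> bool" where
  "regularly_varying f \<gamma> \<longleftrightarrow>
     (\<forall>t>0. f t > 0) \<and>
     (\<forall>s>0. ((\<lambda>t. f (s * t) / f t) \<longlongrightarrow> s powr \<gamma>) at_top)"

definition sym_prob_measure :: "('a::group_add \<Rightarrow> real) \<Rightarrow> bool" where
  "sym_prob_measure \<mu> \<longleftrightarrow> (\<forall>x. \<mu> x \<ge> 0) \<and> (\<mu> has_sum 1) UNIV \<and> (\<forall>x. \<mu> (- x) = \<mu> x)"

definition in_L2 :: "('a \<Rightarrow> real) \<Rightarrow> bool" where
  "in_L2 f \<longleftrightarrow> (\<lambda>x. (f x)\<^sup>2) summable_on UNIV"

definition dirichlet_form :: "('a::group_add \<Rightarrow> real) \<Rightarrow> ('a \<Rightarrow> real) \<Rightarrow> real" where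
  "dirichlet_form \<mu> f = (1/2) * (\<Sum>\<^sub>\<infinity>(x, y)\<in>UNIV. (f (x + y) - f x)\<^sup>2 * \<mu> y)"

end

theory Submission
  imports Defs
begin

text \<open>Write \<open>S(k) = \<Sum>\<^sub>x |f(x + k) - f x|\<^sup>2\<close>, so that the Dirichlet form is \<open>\<Sum>\<^sub>y \<mu>(y) S(y) / 2\<close>.
  Since \<open>S(h) \<le> 2 S(k) + 2 S(-k + h)\<close>, averaging over the ball \<open>B\<close> of radius \<open>R\<close> bounds
  \<open>|B| S(h)\<close> by four times the sum of \<open>S\<close> over the ball \<open>D\<close> of radius \<open>2AR\<close>, \<open>A\<close> the quasi-norm
  constant. On \<open>D\<close> the measure is at least \<open>1 / (\<phi>(3AR) (3AR)\<^sup>d)\<close> up to a constant, while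
  \<open>|B| \<ge> c R\<^sup>d\<close>; regular variation gives \<open>\<phi>(3AR) \<le> K \<phi>(R)\<close>, so the volume factors cancel
  and \<open>S(h) \<le> C \<phi>(R) E(f, f)\<close>.\<close>

definition translation_energy :: "('a::group_add \<Rightarrow> real) \<Rightarrow> 'a \<Rightarrow> real" where
  "translation_energy f h = (\<Sum>\<^sub>\<infinity>x\<in>UNIV. (f (x + h) - f x)\<^sup>2)"

lemma bij_betw_add_right: "bij_betw (\<lambda>x::'a::group_add. x + k) UNIV UNIV"
  by (rule bij_betwI[where g = "\<lambda>x. x - k"]) (auto simp: algebra_simps)

lemma summable_on_translate_iff:
  "(\<lambda>x. g (x + k)) summable_on UNIV \<longleftrightarrow> g summable_on (UNIV :: 'a::group_add set)"
  using summable_on_reindex_bij_betw[OF bij_betw_add_right] .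

lemma infsum_translate: "(\<Sum>\<^sub>\<infinity>x\<in>UNIV. g (x + k)) = (\<Sum>\<^sub>\<infinity>x\<in>(UNIV :: 'a::group_add set). g x)"
  using infsum_reindex_bij_betw[OF bij_betw_add_right] .

lemma square_diff_le: "((a::real) - b)\<^sup>2 \<le> 2 * a\<^sup>2 + 2 * b\<^sup>2"
  using sum_squares_ge_zero[of "a + b" 0] by (simp add: power2_eq_square algebra_simps)

lemma square_add_le: "((a::real) + b)\<^sup>2 \<le> 2 * a\<^sup>2 + 2 * b\<^sup>2"
  using square_diff_le[of a "- b"] by simp

lemma in_L2_increment_summable:
  fixes f :: "'a::group_add \<Rightarrow> real"
  assumes "in_L2 f"
  shows "(\<lambda>x. (f (x + h) - f x)\<^sup>2) summable_on UNIV"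
proof (rule summable_on_comparison_test)
  show "(\<lambda>x. 2 * (f (x + h))\<^sup>2 + 2 * (f x)\<^sup>2) summable_on UNIV"
    using assms by (intro summable_on_add summable_on_cmult_right)
      (simp_all add: in_L2_def summable_on_translate_iff[of "\<lambda>x. (f x)\<^sup>2"])
qed (simp_all add: square_diff_le)

lemma translation_energy_nonneg: "translation_energy f h \<ge> 0"
  unfolding translation_energy_def by (rule infsum_nonneg) simp

lemma translation_energy_translate:
  "(\<Sum>\<^sub>\<infinity>x\<in>UNIV. (f (x + k + h) - f (x + k))\<^sup>2) = translation_energy f h"
  unfolding translation_energy_def using infsum_translate[of "\<lambda>x. (f (x + h) - f x)\<^sup>2" k] by simp

lemma translation_energy_le_L2:
  fixes f :: "'a::group_add \<Rightarrow> real"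
  assumes "in_L2 f"
  shows "translation_energy f h \<le> 4 * (\<Sum>\<^sub>\<infinity>x\<in>UNIV. (f x)\<^sup>2)"
proof -
  have L2: "(\<lambda>x. (f x)\<^sup>2) summable_on UNIV" "(\<lambda>x. (f (x + h))\<^sup>2) summable_on UNIV"
    using assms by (simp_all add: in_L2_def summable_on_translate_iff[of "\<lambda>x. (f x)\<^sup>2"])
  have "translation_energy f h \<le> (\<Sum>\<^sub>\<infinity>x\<in>UNIV. 2 * (f (x + h))\<^sup>2 + 2 * (f x)\<^sup>2)"
    unfolding translation_energy_def
    using L2 in_L2_increment_summable[OF assms]
    by (intro infsum_mono summable_on_add summable_on_cmult_right square_diff_le)
  also have "\<dots> = 2 * (\<Sum>\<^sub>\<infinity>x\<in>UNIV. (f (x + h))\<^sup>2) + 2 * (\<Sum>\<^sub>\<infinity>x\<in>UNIV. (f x)\<^sup>2)"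
    using L2 by (simp add: infsum_add summable_on_cmult_right infsum_cmult_right)
  finally show ?thesis by (simp add: infsum_translate[of "\<lambda>x. (f x)\<^sup>2"])
qed

lemma translation_energy_triangle:
  fixes f :: "'a::group_add \<Rightarrow> real"
  assumes "in_L2 f"
  shows "translation_energy f h \<le> 2 * translation_energy f k + 2 * translation_energy f (- k + h)"
proof -
  let ?u = "\<lambda>x. (f (x + k) - f x)\<^sup>2" and ?v = "\<lambda>x. (f (x + k + (- k + h)) - f (x + k))\<^sup>2"
  have u: "?u summable_on UNIV" by (rule in_L2_increment_summable[OF assms])
  have v: "?v summable_on UNIV"
    using in_L2_increment_summable[OF assms, of "- k + h"]
      summable_on_translate_iff[of "\<lambda>x. (f (x + (- k + h)) - f x)\<^sup>2" k]
    by (simp add: add.assoc)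
  have uv: "(\<lambda>x. 2 * ?u x + 2 * ?v x) summable_on UNIV"
    using u v by (intro summable_on_add summable_on_cmult_right)
  have "translation_energy f h \<le> (\<Sum>\<^sub>\<infinity>x\<in>UNIV. 2 * ?u x + 2 * ?v x)"
    unfolding translation_energy_def
  proof (rule infsum_mono)
    fix x
    show "(f (x + h) - f x)\<^sup>2 \<le> 2 * ?u x + 2 * ?v x"
      using square_add_le[of "f (x + k) - f x" "f (x + k + (- k + h)) - f (x + k)"]
      by (simp add: add.assoc)
  qed (rule in_L2_increment_summable[OF assms], rule uv)
  also have "\<dots> = 2 * translation_energy f k + 2 * translation_energy f (- k + h)"
    using u v by (simp add: infsum_add summable_on_cmult_right infsum_cmult_right
        translation_energy_translate, simp add: translation_energy_def)
  finally show ?thesis .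
qed

lemma weighted_translation_energy_summable:
  fixes f \<mu> :: "'a::group_add \<Rightarrow> real"
  assumes "in_L2 f" "\<And>y. \<mu> y \<ge> 0" "\<mu> summable_on UNIV"
  shows "(\<lambda>y. \<mu> y * translation_energy f y) summable_on UNIV"
proof (rule summable_on_comparison_test)
  show "(\<lambda>y. \<mu> y * (4 * (\<Sum>\<^sub>\<infinity>x\<in>UNIV. (f x)\<^sup>2))) summable_on UNIV"
    using assms(3) by (rule summable_on_cmult_left)
  show "\<mu> y * translation_energy f y \<le> \<mu> y * (4 * (\<Sum>\<^sub>\<infinity>x\<in>UNIV. (f x)\<^sup>2))" for y
    by (rule mult_left_mono[OF translation_energy_le_L2[OF assms(1)] assms(2)])
  show "0 \<le> \<mu> y * translation_energy f y" for y
    by (rule mult_nonneg_nonneg[OF assms(2) translation_energy_nonneg])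
qed

lemma dirichlet_form_eq_translation_energy:
  fixes f \<mu> :: "'a::group_add \<Rightarrow> real"
  assumes "in_L2 f" "\<And>y. \<mu> y \<ge> 0" "\<mu> summable_on UNIV"
  shows "dirichlet_form \<mu> f = (\<Sum>\<^sub>\<infinity>y\<in>UNIV. \<mu> y * translation_energy f y) / 2"
proof -
  let ?P = "\<lambda>(y, x). (f (x + y) - f x)\<^sup>2 * \<mu> y" and ?g = "\<lambda>y. \<mu> y * translation_energy f y"
  have inner: "((\<lambda>x. ?P (y, x)) has_sum ?g y) UNIV" for y
  proof -
    have "((\<lambda>x. (f (x + y) - f x)\<^sup>2) has_sum translation_energy f y) UNIV"
      unfolding translation_energy_def by (rule has_sum_infsum[OF in_L2_increment_summable[OF assms(1)]])
    from has_sum_cmult_left[OF this] show ?thesis by (simp add: mult.commute)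
  qed
  have "?g summable_on UNIV"
    by (rule weighted_translation_energy_summable[OF assms])
  then have "?P summable_on UNIV \<times> UNIV"
    using inner by (intro summable_on_SigmaI) (simp_all add: assms(2))
  then have "(?P has_sum (\<Sum>\<^sub>\<infinity>y\<in>UNIV. ?g y)) (UNIV \<times> UNIV)"
    using inner has_sum_infsum[OF \<open>?g summable_on UNIV\<close>] by (intro has_sum_SigmaI)
  then have "((\<lambda>(x, y). (f (x + y) - f x)\<^sup>2 * \<mu> y) has_sum (\<Sum>\<^sub>\<infinity>y\<in>UNIV. ?g y)) UNIV"
    by (subst (asm) has_sum_swap) simp
  then show ?thesis
    by (simp add: dirichlet_form_def infsumI)
qed

lemma translation_energy_averaged:
  fixes f :: "'a::group_add \<Rightarrow> real"
  assumes "in_L2 f" "finite D" "B \<subseteq> D" "(\<lambda>k. - k + h) ` B \<subseteq> D"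
  shows "card B * translation_energy f h \<le> 4 * sum (translation_energy f) D"
proof -
  have "card B * translation_energy f h = (\<Sum>k\<in>B. translation_energy f h)"
    by simp
  also have "\<dots> \<le> (\<Sum>k\<in>B. 2 * translation_energy f k + 2 * translation_energy f (- k + h))"
    by (rule sum_mono) (rule translation_energy_triangle[OF assms(1)])
  also have "\<dots> = 2 * sum (translation_energy f) B + 2 * sum (translation_energy f) ((\<lambda>k. - k + h) ` B)"
    by (simp add: sum.distrib sum_distrib_left sum.reindex inj_on_def)
  also have "\<dots> \<le> 2 * sum (translation_energy f) D + 2 * sum (translation_energy f) D"
    using assms(2-4) by (intro add_mono mult_left_mono sum_mono2) (simp_all add: translation_energy_nonneg)
  finally show ?thesis by simp
qed

lemma translation_energy_le_dirichlet_form: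
  fixes f \<mu> :: "'a::group_add \<Rightarrow> real"
  assumes "in_L2 f" "\<And>y. \<mu> y \<ge> 0" "\<mu> summable_on UNIV"
    and "finite D" "B \<subseteq> D" "(\<lambda>k. - k + h) ` B \<subseteq> D" "B \<noteq> {}"
    and "m > 0" "\<And>j. j \<in> D \<Longrightarrow> m \<le> \<mu> j"
  shows "translation_energy f h \<le> 8 / (m * card B) * dirichlet_form \<mu> f"
proof -
  have "card B > 0" using assms(4,5,7) by (simp add: card_gt_0_iff finite_subset)
  have "m * sum (translation_energy f) D \<le> (\<Sum>j\<in>D. \<mu> j * translation_energy f j)"
    by (simp add: sum_distrib_left sum_mono mult_right_mono assms(9) translation_energy_nonneg)
  also have "\<dots> \<le> (\<Sum>\<^sub>\<infinity>y\<in>UNIV. \<mu> y * translation_energy f y)"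
    using weighted_translation_energy_summable[OF assms(1-3)]
    by (rule finite_sum_le_infsum) (simp_all add: assms(2,4) translation_energy_nonneg)
  also have "\<dots> = 2 * dirichlet_form \<mu> f"
    by (simp add: dirichlet_form_eq_translation_energy[OF assms(1-3)])
  finally have "sum (translation_energy f) D \<le> 2 / m * dirichlet_form \<mu> f"
    using assms(8) by (simp add: field_simps)
  then have "card B * translation_energy f h \<le> 8 / m * dirichlet_form \<mu> f"
    using translation_energy_averaged[OF assms(1,4-6)] by simp
  then show ?thesis
    using \<open>card B > 0\<close> assms(8) by (simp add: field_simps mult.commute)
qed

lemma quasi_norm_on_const_ge_1:
  assumes "quasi_norm_on H N"
  obtains A where "A \<ge> 1" "\<And>g h. g \<in> H \<Longrightarrow> h \<in> H \<Longrightarrow> N (g + h) \<le> A * (N g + N h)"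
proof -
  obtain A where A: "\<And>g h. g \<in> H \<Longrightarrow> h \<in> H \<Longrightarrow> N (g + h) \<le> A * (N g + N h)"
    using assms unfolding quasi_norm_on_def by blast
  have "N (g + h) \<le> max A 1 * (N g + N h)" if "g \<in> H" "h \<in> H" for g h
  proof -
    have "0 \<le> N g + N h" using assms that by (simp add: quasi_norm_on_def)
    then have "A * (N g + N h) \<le> max A 1 * (N g + N h)" by (simp add: mult_right_mono)
    then show ?thesis using A[OF that] by linarith
  qed
  then show ?thesis by (intro that[of "max A 1"]) auto
qed

lemma quasi_norm_on_translate_ball:
  assumes "is_subgroup H" "quasi_norm_on H N" "A \<ge> 0"
    and "\<And>g h. g \<in> H \<Longrightarrow> h \<in> H \<Longrightarrow> N (g + h) \<le> A * (N g + N h)"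
    and "h \<in> H" "N h \<le> R"
  shows "(\<lambda>k. - k + h) ` {k \<in> H. N k \<le> R} \<subseteq> {k \<in> H. N k \<le> 2 * A * R}"
proof (rule image_subsetI)
  fix k assume "k \<in> {k \<in> H. N k \<le> R}"
  then have k: "k \<in> H" "N k \<le> R" by auto
  then have "- k \<in> H" "N (- k) = N k"
    using assms(1,2) by (auto simp: is_subgroup_def quasi_norm_on_def)
  then have "- k + h \<in> H" using assms(1,5) by (simp add: is_subgroup_def)
  have "N (- k + h) \<le> A * (N (- k) + N h)" by (rule assms(4)[OF \<open>- k \<in> H\<close> assms(5)])
  also have "\<dots> \<le> A * (R + R)"
    using \<open>N (- k) = N k\<close> k(2) assms(3,6) by (intro mult_left_mono) auto
  finally show "- k + h \<in> {k \<in> H. N k \<le> 2 * A * R}"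
    using \<open>- k + h \<in> H\<close> by simp
qed

lemma regularly_varying_ratio_bounded:
  assumes "regularly_varying \<phi> \<gamma>" "mono_on {0<..} \<phi>" "s > 0"
  obtains K where "\<And>R. R \<ge> 1 \<Longrightarrow> \<phi> (s * R) \<le> K * \<phi> R"
proof -
  have pos: "\<And>t. t > 0 \<Longrightarrow> \<phi> t > 0" and
    lim: "((\<lambda>t. \<phi> (s * t) / \<phi> t) \<longlongrightarrow> s powr \<gamma>) at_top"
    using assms(1,3) by (auto simp: regularly_varying_def)
  obtain T where T: "\<And>t. t \<ge> T \<Longrightarrow> \<phi> (s * t) / \<phi> t < s powr \<gamma> + 1"
    using order_tendstoD(2)[OF lim, of "s powr \<gamma> + 1"] by (auto simp: eventually_at_top_linorder)
  define K where "K = max (s powr \<gamma> + 1) (\<phi> (s * max T 1) / \<phi> 1)"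
  have "\<phi> (s * R) \<le> K * \<phi> R" if "R \<ge> 1" for R
  proof (cases "R \<ge> T")
    case True
    have "\<phi> (s * R) \<le> (s powr \<gamma> + 1) * \<phi> R"
      using T[OF True] pos[of R] that by (simp add: divide_less_eq)
    also have "\<dots> \<le> K * \<phi> R"
      using pos[of R] that by (intro mult_right_mono) (auto simp: K_def)
    finally show ?thesis .
  next
    case False
    have "\<phi> (s * R) \<le> \<phi> (s * max T 1)"
      using assms(3) False that by (intro mono_onD[OF assms(2)]) auto
    also have "\<dots> = \<phi> (s * max T 1) / \<phi> 1 * \<phi> 1"
      using pos[of 1] by simp
    also have "\<dots> \<le> K * \<phi> 1"
      using pos[of 1] by (intro mult_right_mono) (auto simp: K_def)
    also have "\<dots> \<le> K * \<phi> R"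
    proof (rule mult_left_mono)
      show "\<phi> 1 \<le> \<phi> R" using that by (intro mono_onD[OF assms(2)]) auto
      have "0 \<le> s powr \<gamma> + 1" by (simp add: add_nonneg_nonneg)
      then show "0 \<le> K" by (simp add: K_def le_max_iff_disj)
    qed
    finally show ?thesis .
  qed
  then show ?thesis by (rule that)
qed

lemma density_profile_mono:
  fixes \<phi> :: "real \<Rightarrow> real" and a b d :: real
  assumes "mono_on {0<..} \<phi>" "\<And>t. t > 0 \<Longrightarrow> \<phi> t > 0" "0 \<le> a" "a \<le> b" "d \<ge> 0"
  shows "\<phi> (1 + a) * (1 + a) powr d \<le> \<phi> (1 + b) * (1 + b) powr d"
proof (rule mult_mono)
  show "\<phi> (1 + a) \<le> \<phi> (1 + b)" using assms(3,4) by (intro mono_onD[OF assms(1)]) auto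
  show "(1 + a) powr d \<le> (1 + b) powr d" using assms(3-5) by (intro powr_mono2) auto
  show "0 \<le> \<phi> (1 + b)" using assms(2)[of "1 + b"] assms(3,4) by simp
qed simp

lemma density_profile_ball_ratio:
  fixes \<phi> :: "real \<Rightarrow> real"
  assumes "mono_on {0<..} \<phi>" "\<And>t. t > 0 \<Longrightarrow> \<phi> t > 0" "d \<ge> 0"
    and "A \<ge> 1" "R \<ge> 1" "c1 > 0" "c2 > 0"
    and "c1 * (c2 * R) powr d \<le> real n" "\<phi> (3 * A * R) \<le> K * \<phi> R"
  shows "\<phi> (1 + 2 * A * R) * (1 + 2 * A * R) powr d / n \<le> K * (3 * A / c2) powr d / c1 * \<phi> R"
proof -
  have "1 \<le> A * R" using assms(4,5) by (metis mult_ge1_I)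
  then have "\<phi> (1 + 2 * A * R) * (1 + 2 * A * R) powr d \<le> \<phi> (3 * A * R) * (3 * A * R) powr d"
    using density_profile_mono[OF assms(1-2), of "2 * A * R" "3 * A * R - 1" d] assms(3) by simp
  also have "\<dots> \<le> K * \<phi> R * (3 * A * R) powr d"
    using assms(9) by (simp add: mult_right_mono)
  finally have num: "\<phi> (1 + 2 * A * R) * (1 + 2 * A * R) powr d \<le> K * \<phi> R * (3 * A * R) powr d" .
  have den: "0 < c1 * (c2 * R) powr d" using assms(5-7) by simp
  have "\<phi> (1 + 2 * A * R) * (1 + 2 * A * R) powr d / n
      \<le> K * \<phi> R * (3 * A * R) powr d / (c1 * (c2 * R) powr d)"
  proof (rule frac_le)
    have "0 < \<phi> (1 + 2 * A * R) * (1 + 2 * A * R) powr d"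
      using assms(2)[of "1 + 2 * A * R"] \<open>1 \<le> A * R\<close> by simp
    then show "0 \<le> K * \<phi> R * (3 * A * R) powr d" using num by linarith
  qed (use num den assms(8) in auto)
  also have "\<dots> = K * ((3 * A * R) powr d / (c2 * R) powr d) / c1 * \<phi> R"
    by (simp add: mult_ac)
  also have "(3 * A * R) powr d / (c2 * R) powr d = (3 * A / c2) powr d"
    using assms(4,5,7) by (simp add: powr_divide[symmetric])
  finally show ?thesis .
qed

lemma dirichlet_form_nonneg:
  assumes "\<And>y. \<mu> y \<ge> 0"
  shows "dirichlet_form \<mu> f \<ge> 0"
  unfolding dirichlet_form_def using assms by (auto intro!: infsum_nonneg)

lemma translation_energy_le_dirichlet_form_profile:
  fixes f \<mu> :: "'a::group_add \<Rightarrow> real" and \<phi> :: "real \<Rightarrow> real"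
  assumes "in_L2 f" "\<And>y. \<mu> y \<ge> 0" "\<mu> summable_on UNIV"
    and "is_subgroup H" "quasi_norm_on H N" "A \<ge> 1"
    and "\<And>g h. g \<in> H \<Longrightarrow> h \<in> H \<Longrightarrow> N (g + h) \<le> A * (N g + N h)"
    and "mono_on {0<..} \<phi>" "\<And>t. t > 0 \<Longrightarrow> \<phi> t > 0" "d \<ge> 0" "m > 0"
    and density: "\<And>h. h \<in> H \<Longrightarrow> m / (\<phi> (1 + N h) * (1 + N h) powr d) \<le> \<mu> h"
    and "h \<in> H" "N h \<le> R" "R \<ge> 1"
    and "finite {k \<in> H. N k \<le> 2 * A * R}"
  shows "translation_energy f h
    \<le> 8 / m * (\<phi> (1 + 2 * A * R) * (1 + 2 * A * R) powr d / card {k \<in> H. N k \<le> R})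
        * dirichlet_form \<mu> f"
proof -
  let ?B = "{k \<in> H. N k \<le> R}" and ?D = "{k \<in> H. N k \<le> 2 * A * R}"
  let ?Q = "\<phi> (1 + 2 * A * R) * (1 + 2 * A * R) powr d"
  have "1 * R \<le> 2 * A * R" by (rule mult_right_mono) (use assms(6,15) in auto)
  then have "R \<le> 2 * A * R" by (simp only: mult_1)
  then have "1 \<le> 2 * A * R" using assms(15) by linarith
  have "0 < ?Q" using assms(9)[of "1 + 2 * A * R"] \<open>1 \<le> 2 * A * R\<close> by simp
  have "m / ?Q \<le> \<mu> j" if "j \<in> ?D" for j
  proof -
    have "0 \<le> N j" "N j \<le> 2 * A * R" using that assms(5) by (auto simp: quasi_norm_on_def)
    then have "m / ?Q \<le> m / (\<phi> (1 + N j) * (1 + N j) powr d)"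
      using \<open>0 < ?Q\<close> assms(9)[of "1 + N j"] assms(10,11)
      by (intro divide_left_mono density_profile_mono[OF assms(8,9)]) auto
    also have "\<dots> \<le> \<mu> j" using that by (intro density) auto
    finally show ?thesis .
  qed
  then have "translation_energy f h \<le> 8 / (m / ?Q * card ?B) * dirichlet_form \<mu> f"
    using \<open>R \<le> 2 * A * R\<close> \<open>0 < ?Q\<close> assms(6,11,13,14,16)
      quasi_norm_on_translate_ball[OF assms(4,5) _ assms(7,13,14)]
    by (intro translation_energy_le_dirichlet_form[OF assms(1-3)]) auto
  then show ?thesis by (simp add: mult_ac)
qed

theorem mainTheorem10:
  fixes \<mu> :: "'a::{group_add, countable} \<Rightarrow> real"
    and H :: "'a set" and N :: "'a \<Rightarrow> real" and \<phi> :: "real \<Rightarrow> real"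
    and d \<gamma> :: real
  assumes "sym_prob_measure \<mu>"
    and "is_subgroup H"
    and "\<forall>x. x \<notin> H \<longrightarrow> \<mu> x = 0"
    and "quasi_norm_on H N"
    and "d > 0"
    and "\<forall>t>0. \<phi> t > 0"
    and "mono_on {0<..} \<phi>"
    and "\<gamma> > 0" and "regularly_varying \<phi> \<gamma>"
    and "\<exists>c1 c2 c3 c4. c1 > 0 \<and> c2 > 0 \<and> c3 > 0 \<and> c4 > 0 \<and>
           (\<forall>r\<ge>1. c1 * (c2 * r) powr d \<le> real (card {h\<in>H. N h \<le> r}) \<and>
                    real (card {h\<in>H. N h \<le> r}) \<le> c3 * (c4 * r) powr d)"
    and "\<exists>c1 c2. c1 > 0 \<and> c2 > 0 \<and>
           (\<forall>h\<in>H. c1 / (\<phi> (1 + N h) * (1 + N h) powr d) \<le> \<mu> h \<and>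
                   \<mu> h \<le> c2 / (\<phi> (1 + N h) * (1 + N h) powr d))"
  shows "\<exists>C. \<forall>f. in_L2 f \<longrightarrow> (\<forall>R\<ge>1. \<forall>h\<in>H. N h \<le> R \<longrightarrow>
           (\<Sum>\<^sub>\<infinity>x\<in>UNIV. (f (x + h) - f x)\<^sup>2) \<le> C * \<phi> R * dirichlet_form \<mu> f)"
proof -
  obtain A where A: "A \<ge> 1" "\<And>g h. g \<in> H \<Longrightarrow> h \<in> H \<Longrightarrow> N (g + h) \<le> A * (N g + N h)"
    using quasi_norm_on_const_ge_1[OF assms(4)] by blast
  obtain c1 c2 where c: "c1 > 0" "c2 > 0"
    and ball_count: "\<And>r. r \<ge> 1 \<Longrightarrow> c1 * (c2 * r) powr d \<le> real (card {h \<in> H. N h \<le> r})"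
    using assms(10) by blast
  obtain m where "m > 0"
    and density: "\<And>h. h \<in> H \<Longrightarrow> m / (\<phi> (1 + N h) * (1 + N h) powr d) \<le> \<mu> h"
    using assms(11) by blast
  obtain K where doubling: "\<And>R. R \<ge> 1 \<Longrightarrow> \<phi> (3 * A * R) \<le> K * \<phi> R"
    using regularly_varying_ratio_bounded[OF assms(9,7), of "3 * A"] A(1) by auto
  have \<mu>: "\<And>y. \<mu> y \<ge> 0" "\<mu> summable_on UNIV"
    using assms(1) by (auto simp: sym_prob_measure_def summable_on_def)
  have \<phi>: "\<And>t. t > 0 \<Longrightarrow> \<phi> t > 0" using assms(6) by blast
  have finite_ball: "finite {h \<in> H. N h \<le> r}" for r
  proof -
    have "0 < real (card {h \<in> H. N h \<le> max r 1})"
      by (rule less_le_trans[OF _ ball_count]) (use c in simp_all)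
    then have "finite {h \<in> H. N h \<le> max r 1}" by (simp add: card_gt_0_iff)
    then show ?thesis by (rule rev_finite_subset) auto
  qed
  show ?thesis
  proof (intro exI[of _ "8 / m * (K * (3 * A / c2) powr d / c1)"] allI impI ballI)
    fix f :: "'a \<Rightarrow> real" and R h assume "in_L2 f" "R \<ge> 1" "h \<in> H" "N h \<le> R"
    have "translation_energy f h \<le> 8 / m * (\<phi> (1 + 2 * A * R) * (1 + 2 * A * R) powr d
        / card {k \<in> H. N k \<le> R}) * dirichlet_form \<mu> f"
      using assms(5) \<open>m > 0\<close>
      by (intro translation_energy_le_dirichlet_form_profile[OF \<open>in_L2 f\<close> \<mu> assms(2,4) A
            assms(7) \<phi> _ _ density \<open>h \<in> H\<close> \<open>N h \<le> R\<close> \<open>R \<ge> 1\<close> finite_ball]) auto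
    also have "\<dots> \<le> 8 / m * (K * (3 * A / c2) powr d / c1 * \<phi> R) * dirichlet_form \<mu> f"
      using assms(5) A(1) \<open>R \<ge> 1\<close> c ball_count[OF \<open>R \<ge> 1\<close>] doubling[OF \<open>R \<ge> 1\<close>] \<open>m > 0\<close>
      by (intro mult_right_mono mult_left_mono density_profile_ball_ratio[OF assms(7) \<phi>]
          dirichlet_form_nonneg \<mu>) auto
    finally show "(\<Sum>\<^sub>\<infinity>x\<in>UNIV. (f (x + h) - f x)\<^sup>2)
        \<le> 8 / m * (K * (3 * A / c2) powr d / c1) * \<phi> R * dirichlet_form \<mu> f"
      by (simp add: translation_energy_def mult_ac)
  qed
qed

end
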